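(* Let $\mu$ be a finitely supported probability measure on $\mathrm{Homeo}_+(\mathbb{R})$ whose random dynamical system is recurrent. Then there exists a nonzero Radon measure $\nu$ on $\mathbb{R}$ (finite on compact sets) that is stationary for $\mu$.
   Context: Let $\mu$ be supported on $\{f_1,\dots,f_k\}\subset\mathrm{Homeo}_+(\mathbb{R})$ with $p_i=\mu(\{f_i\})>0$. Let $g_1,g_2,\dots$ be i.i.d. with law $\mu$ and $F_n=g_n\circ\cdots\circ g_1$. The system is recurrent if there is a compact interval $J\subset\mathbb{R}$ such that for every $x\in\mathbb{R}$, almost surely $F_n(x)\in J$ for infinitely many $n$. A Borel measure $\nu$ on $\mathbb{R}$ is stationary for $\mu$ if $\nu(A)=\sum_i p_i\,\nu(f_i^{-1}(A))$ for every Borel set $A$. *)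

theory Defs
  imports "HOL-Probability.Probability"
begin

definition homeo_plus :: "(real \<Rightarrow> real) \<Rightarrow> bool" where
  "homeo_plus f \<longleftrightarrow> strict_mono f \<and> (\<exists>g. homeomorphism UNIV UNIV f g)"

text \<open>Random composition F_n = g_n o ... o g_1, where g_(i+1) is the i-th entry of the stream.\<close>
primrec rcomp :: "nat \<Rightarrow> (real \<Rightarrow> real) stream \<Rightarrow> real \<Rightarrow> real" where
  "rcomp 0 \<omega> = id"
| "rcomp (Suc n) \<omega> = (\<omega> !! n) \<circ> rcomp n \<omega>"

definition recurrent :: "(real \<Rightarrow> real) pmf \<Rightarrow> bool" where
  "recurrent \<mu> \<longleftrightarrow> (\<exists>a b. a \<le> b \<and> (\<forall>x.
      AE \<omega> in stream_space (measure_pmf \<mu>). (\<exists>\<^sub>\<infinity> n. rcomp n \<omega> x \<in> {a..b})))"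

definition stationary :: "(real \<Rightarrow> real) pmf \<Rightarrow> real measure \<Rightarrow> bool" where
  "stationary \<mu> \<nu> \<longleftrightarrow> (\<forall>A \<in> sets borel.
      emeasure \<nu> A = (\<Sum>f\<in>set_pmf \<mu>. ennreal (pmf \<mu> f) * emeasure \<nu> (f -` A)))"

end

theory Submission
  imports Defs "HOL-Library.Diagonal_Subsequence"
begin

(* Let Z_N be the expected number of visits of F_n(0), n < N, to a bounded open interval V
   containing the recurrent interval J. By Borel-Cantelli, recurrence forces Z_N to diverge.
   The expected occupation measures of F_n(0), n < N, divided by Z_N, are stationary up to an
   error of total mass at most 1/Z_N. They are also locally bounded: every point reaches V with
   positive probability, so by continuity and compactness every point of a compact set K
   reaches V within a bounded time with probability bounded from below, and the expected
   number of visits to K is at most a constant times the expected number of visits to V.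
   A diagonal (Helly) argument on a countable dense set invariant under the inverses of the
   f_i produces a nonconstant right-continuous distribution function G with
   G = sum_i p_i G o f_i^-1, and the Stieltjes measure of G is stationary. *)

lemma homeo_plus_strict_mono: "homeo_plus f \<Longrightarrow> strict_mono f"
  by (simp add: homeo_plus_def)

lemma homeo_plus_continuous: "homeo_plus f \<Longrightarrow> continuous_on UNIV f"
  by (auto simp: homeo_plus_def homeomorphism_def)

lemma homeo_plus_inv_apply:
  assumes "homeo_plus f"
  shows "inv f (f x) = x" and "f (inv f y) = y"
proof -
  obtain g where "homeomorphism UNIV UNIV f g"
    using assms by (auto simp: homeo_plus_def)
  then have "inj f" "surj f"
    by (metis homeomorphism_def UNIV_I injI, metis homeomorphism_image1)
  then show "inv f (f x) = x" "f (inv f y) = y"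
    by (simp_all add: surj_f_inv_f)
qed

lemma homeo_plus_inv:
  assumes "homeo_plus f"
  shows "homeo_plus (inv f)"
proof -
  obtain g where mono_f: "strict_mono f" and hom: "homeomorphism UNIV UNIV f g"
    using assms by (auto simp: homeo_plus_def)
  have inv_f: "inv f = g"
    using hom by (intro inv_equality) (auto simp: homeomorphism_def)
  have "strict_mono g"
    using hom by (intro strict_mono_inv[OF mono_f]) (auto simp: homeomorphism_def)
  then show ?thesis
    using homeomorphism_symD[OF hom] by (auto simp: homeo_plus_def inv_f)
qed

lemma homeo_plus_le_iff: "homeo_plus f \<Longrightarrow> f x \<le> y \<longleftrightarrow> x \<le> inv f y"
  by (metis homeo_plus_inv_apply(2) homeo_plus_strict_mono strict_mono_less_eq)

lemma homeo_plus_less_iff: "homeo_plus f \<Longrightarrow> y < f x \<longleftrightarrow> inv f y < x"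
  by (metis homeo_plus_inv_apply(2) homeo_plus_strict_mono strict_mono_less)

lemma vimage_atMost_homeo_plus: "homeo_plus f \<Longrightarrow> f -` {..y} = {..inv f y}"
  by (auto simp: homeo_plus_le_iff)

lemma vimage_Ioc_homeo_plus: "homeo_plus f \<Longrightarrow> f -` {a<..b} = {inv f a<..inv f b}"
  by (auto simp: homeo_plus_le_iff homeo_plus_less_iff)

lemma borel_measurable_homeo_plus: "homeo_plus f \<Longrightarrow> f \<in> borel_measurable borel"
  by (intro borel_measurable_continuous_onI homeo_plus_continuous)

section \<open>Laws of the random compositions\<close>

text \<open>The law of rcomp n when the entries of the stream are independent with law \<mu>.\<close>

primrec rcomp_pmf :: "(real \<Rightarrow> real) pmf \<Rightarrow> nat \<Rightarrow> (real \<Rightarrow> real) pmf" where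
  "rcomp_pmf \<mu> 0 = return_pmf id"
| "rcomp_pmf \<mu> (Suc n) = bind_pmf (rcomp_pmf \<mu> n) (\<lambda>h. map_pmf (\<lambda>f. f \<circ> h) \<mu>)"

lemma rcomp_pmf_add:
  "rcomp_pmf \<mu> (n + j) = bind_pmf (rcomp_pmf \<mu> n) (\<lambda>h. map_pmf (\<lambda>g. g \<circ> h) (rcomp_pmf \<mu> j))"
proof (induction j)
  case 0
  then show ?case by (simp add: map_return_pmf bind_return_pmf')
next
  case (Suc j)
  then show ?case
    by (simp add: bind_assoc_pmf bind_map_pmf map_bind_pmf map_pmf_comp o_assoc comp_def)
qed

lemma rcomp_pmf_Suc_0: "rcomp_pmf \<mu> (Suc 0) = \<mu>"
  by (simp add: bind_return_pmf comp_def map_pmf_ident)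

lemma continuous_on_rcomp_pmf:
  assumes "\<And>f. f \<in> set_pmf \<mu> \<Longrightarrow> continuous_on UNIV f"
  shows "h \<in> set_pmf (rcomp_pmf \<mu> n) \<Longrightarrow> continuous_on UNIV h"
proof (induction n arbitrary: h)
  case 0
  then show ?case by (simp add: id_def)
next
  case (Suc n)
  then obtain h' f where "h' \<in> set_pmf (rcomp_pmf \<mu> n)" "f \<in> set_pmf \<mu>" "h = f \<circ> h'"
    by auto
  with Suc.IH assms show ?case
    by (metis continuous_on_compose continuous_on_subset top_greatest)
qed

lemma rcomp_Suc_stl: "rcomp (Suc n) \<omega> = rcomp n (stl \<omega>) \<circ> shd \<omega>"
proof (induction n arbitrary: \<omega>)
  case 0
  then show ?case by simp
next
  case (Suc n)
  have "rcomp (Suc (Suc n)) \<omega> = \<omega> !! Suc n \<circ> rcomp (Suc n) \<omega>"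
    by simp
  also have "\<dots> = stl \<omega> !! n \<circ> (rcomp n (stl \<omega>) \<circ> shd \<omega>)"
    by (simp only: Suc.IH snth.simps)
  finally show ?case by (simp add: o_assoc)
qed

lemma measure_pmf_eq_sum_indicator:
  assumes "finite (set_pmf p)"
  shows "measure_pmf.prob p B = (\<Sum>a\<in>set_pmf p. pmf p a * indicator B a)"
proof -
  have "measure_pmf.prob p B = measure_pmf.prob p (B \<inter> set_pmf p)"
    by (simp add: measure_Int_set_pmf)
  also have "\<dots> = sum (pmf p) (B \<inter> set_pmf p)"
    using assms by (simp add: measure_measure_pmf_finite)
  also have "\<dots> = (\<Sum>a\<in>set_pmf p. pmf p a * indicator B a)"
    using assms by (simp add: sum.inter_restrict Int_commute indicator_def if_distrib cong: if_cong)
  finally show ?thesis .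
qed

lemma measure_bind_pmf_finite:
  assumes "finite (set_pmf p)"
  shows "measure_pmf.prob (bind_pmf p f) A = (\<Sum>a\<in>set_pmf p. pmf p a * measure_pmf.prob (f a) A)"
proof -
  have "ennreal (measure_pmf.prob (bind_pmf p f) A) = (\<integral>\<^sup>+ x. emeasure (measure_pmf (f x)) A \<partial>measure_pmf p)"
    by (simp add: measure_pmf.emeasure_eq_measure[symmetric] emeasure_bind_pmf)
  also have "\<dots> = (\<Sum>x\<in>set_pmf p. emeasure (measure_pmf (f x)) A * ennreal (pmf p x))"
    using assms by (simp add: nn_integral_measure_pmf_finite)
  also have "\<dots> = (\<Sum>x\<in>set_pmf p. ennreal (pmf p x * measure_pmf.prob (f x) A))"
    by (simp add: measure_pmf.emeasure_eq_measure ennreal_mult' mult.commute)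
  also have "\<dots> = ennreal (\<Sum>a\<in>set_pmf p. pmf p a * measure_pmf.prob (f a) A)"
    by (rule sum_ennreal) simp
  finally show ?thesis by (simp add: sum_nonneg)
qed

definition trans_prob :: "(real \<Rightarrow> real) pmf \<Rightarrow> nat \<Rightarrow> real \<Rightarrow> real set \<Rightarrow> real" where
  "trans_prob \<mu> n x B = measure_pmf.prob (rcomp_pmf \<mu> n) {h. h x \<in> B}"

lemma trans_prob_nonneg: "0 \<le> trans_prob \<mu> n x B"
  by (simp add: trans_prob_def)

lemma trans_prob_le_1: "trans_prob \<mu> n x B \<le> 1"
  by (simp add: trans_prob_def)

lemma trans_prob_mono: "B \<subseteq> B' \<Longrightarrow> trans_prob \<mu> n x B \<le> trans_prob \<mu> n x B'"
  unfolding trans_prob_def by (rule measure_pmf.finite_measure_mono) auto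

lemma trans_prob_0: "trans_prob \<mu> 0 x B = indicator B x"
  by (simp add: trans_prob_def indicator_def)

lemma trans_prob_Un:
  "A \<inter> B = {} \<Longrightarrow> trans_prob \<mu> n x (A \<union> B) = trans_prob \<mu> n x A + trans_prob \<mu> n x B"
  unfolding trans_prob_def
  by (subst measure_pmf.finite_measure_Union[symmetric]) (auto intro: arg_cong2[where f=measure])

lemma trans_prob_pos_iff:
  "0 < trans_prob \<mu> n x B \<longleftrightarrow> (\<exists>h\<in>set_pmf (rcomp_pmf \<mu> n). h x \<in> B)"
  using measure_pmf_zero_iff[of "rcomp_pmf \<mu> n" "{h. h x \<in> B}"] trans_prob_nonneg[of \<mu> n x B]
  by (auto simp: trans_prob_def intro: measure_pmf_posI)

lemma AE_in_streams_set_pmf: "AE \<omega> in stream_space (measure_pmf p). \<omega> \<in> streams (set_pmf p)"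
proof -
  have "AE \<omega> in stream_space (measure_pmf p). stream_all (\<lambda>f. f \<in> set_pmf p) \<omega>"
    by (rule prob_space.AE_stream_all[OF prob_space_measure_pmf])
       (auto simp: measurable_pmf_measure1 AE_measure_pmf)
  then show ?thesis
    by (simp add: stream_all_iff streams_iff_sset subset_eq)
qed

lemma partial_sums_at_top_if_not_summable:
  fixes f :: "nat \<Rightarrow> real"
  assumes nonneg: "\<And>n. 0 \<le> f n" and "\<not> summable f"
  shows "filterlim (\<lambda>N. \<Sum>n<N. f n) at_top sequentially"
proof (subst filterlim_at_top, intro allI)
  fix M :: real
  have "\<exists>N. M \<le> (\<Sum>n<N. f n)"
  proof (rule ccontr)
    assume "\<nexists>N. M \<le> (\<Sum>n<N. f n)"
    then have "(\<Sum>n<N. f n) \<le> M" for N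
      by (meson linorder_le_cases)
    then have "summable f"
      by (intro summableI_nonneg_bounded[OF nonneg])
    with assms(2) show False by simp
  qed
  then obtain N where N: "M \<le> (\<Sum>n<N. f n)" ..
  have "(\<Sum>n<N. f n) \<le> (\<Sum>n<N'. f n)" if "N \<le> N'" for N'
    using that nonneg by (intro sum_mono2) auto
  then show "eventually (\<lambda>N. M \<le> (\<Sum>n<N. f n)) sequentially"
    using N unfolding eventually_sequentially by (meson order_trans)
qed

locale finite_rds =
  fixes \<mu> :: "(real \<Rightarrow> real) pmf"
  assumes finite_support: "finite (set_pmf \<mu>)"
begin

lemma finite_set_rcomp_pmf: "finite (set_pmf (rcomp_pmf \<mu> n))"
  using finite_support by (induction n) auto

lemma trans_prob_eq_sum:
  "trans_prob \<mu> n x B = (\<Sum>h\<in>set_pmf (rcomp_pmf \<mu> n). pmf (rcomp_pmf \<mu> n) h * indicator B (h x))"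
  unfolding trans_prob_def
  by (subst measure_pmf_eq_sum_indicator) (auto simp: finite_set_rcomp_pmf indicator_def)

lemma trans_prob_add:
  "trans_prob \<mu> (n + j) x B =
     (\<Sum>h\<in>set_pmf (rcomp_pmf \<mu> n). pmf (rcomp_pmf \<mu> n) h * trans_prob \<mu> j (h x) B)"
  unfolding trans_prob_def rcomp_pmf_add
  by (subst measure_bind_pmf_finite) (auto simp: finite_set_rcomp_pmf vimage_def)

lemma trans_prob_Suc:
  "trans_prob \<mu> (Suc n) x B = (\<Sum>f\<in>set_pmf \<mu>. pmf \<mu> f * trans_prob \<mu> n (f x) B)"
  using trans_prob_add[of "Suc 0" n x B] by (simp add: rcomp_pmf_Suc_0 del: rcomp_pmf.simps)

lemma trans_prob_Suc_last:
  "trans_prob \<mu> (Suc n) x B = (\<Sum>f\<in>set_pmf \<mu>. pmf \<mu> f * trans_prob \<mu> n x (f -` B))"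
proof -
  let ?W = "rcomp_pmf \<mu> n"
  have one_step: "trans_prob \<mu> (Suc 0) y B = (\<Sum>f\<in>set_pmf \<mu>. pmf \<mu> f * indicator B (f y))" for y
    using trans_prob_eq_sum[of "Suc 0" y B] by (simp add: rcomp_pmf_Suc_0 del: rcomp_pmf.simps)
  have "trans_prob \<mu> (Suc n) x B =
      (\<Sum>h\<in>set_pmf ?W. pmf ?W h * (\<Sum>f\<in>set_pmf \<mu>. pmf \<mu> f * indicator (f -` B) (h x)))"
    using trans_prob_add[of n "Suc 0" x B] by (simp add: one_step indicator_def)
  also have "\<dots> = (\<Sum>f\<in>set_pmf \<mu>. pmf \<mu> f * trans_prob \<mu> n x (f -` B))"
    by (simp add: trans_prob_eq_sum sum_distrib_left sum.swap[of _ "set_pmf ?W"] algebra_simps)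
  finally show ?thesis .
qed

abbreviation paths :: "(real \<Rightarrow> real) stream measure" where
  "paths \<equiv> stream_space (measure_pmf \<mu>)"

text \<open>Restricting to streams in the support makes the first step range over a finite set,
  which is what makes these events measurable.\<close>

definition visits :: "nat \<Rightarrow> real \<Rightarrow> real set \<Rightarrow> (real \<Rightarrow> real) stream set" where
  "visits n x A = {\<omega> \<in> streams (set_pmf \<mu>). rcomp n \<omega> x \<in> A}"

lemma space_paths [simp]: "space paths = UNIV"
  by (simp add: space_stream_space)

lemma visits_0: "visits 0 x A = (if x \<in> A then streams (set_pmf \<mu>) else {})"
  by (auto simp: visits_def)

lemma visits_Suc:
  "visits (Suc n) x A =
     (\<Union>f\<in>set_pmf \<mu>. (shd -` {f} \<inter> space paths) \<inter> (stl -` visits n (f x) A \<inter> space paths))"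
proof (rule set_eqI)
  fix \<omega> :: "(real \<Rightarrow> real) stream"
  have "rcomp (Suc n) \<omega> x = rcomp n (stl \<omega>) (shd \<omega> x)"
    by (simp only: rcomp_Suc_stl o_def)
  moreover have "\<omega> \<in> streams (set_pmf \<mu>) \<longleftrightarrow> shd \<omega> \<in> set_pmf \<mu> \<and> stl \<omega> \<in> streams (set_pmf \<mu>)"
    by (metis stream.collapse streams_Stream)
  ultimately show "\<omega> \<in> visits (Suc n) x A \<longleftrightarrow>
      \<omega> \<in> (\<Union>f\<in>set_pmf \<mu>. (shd -` {f} \<inter> space paths) \<inter> (stl -` visits n (f x) A \<inter> space paths))"
    unfolding visits_def by auto
qed

lemma sets_visits: "visits n x A \<in> sets paths"
proof (induction n arbitrary: x)
  case 0
  have "streams (set_pmf \<mu>) \<in> sets paths"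
    by (rule streams_sets) simp
  then show ?case by (simp add: visits_0)
next
  case (Suc n)
  have "shd -` {f} \<inter> space paths \<in> sets paths" for f
    by (rule measurable_sets[OF measurable_shd]) simp
  moreover have "stl -` visits n y A \<inter> space paths \<in> sets paths" for y
    by (rule measurable_sets[OF measurable_stl Suc.IH])
  ultimately show ?case
    unfolding visits_Suc using finite_support by (intro sets.finite_UN) auto
qed

lemma emeasure_visits: "emeasure paths (visits n x A) = ennreal (trans_prob \<mu> n x A)"
proof (induction n arbitrary: x)
  case 0
  have "emeasure paths (streams (set_pmf \<mu>)) = 1"
    by (rule prob_space.emeasure_eq_1_AE[OF prob_space.prob_space_stream_space[OF prob_space_measure_pmf]])
       (auto intro: streams_sets AE_in_streams_set_pmf)
  then show ?case by (simp add: visits_0 trans_prob_0)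
next
  case (Suc n)
  have shift: "{\<omega> \<in> space paths. t ## \<omega> \<in> visits (Suc n) x A} =
      (if t \<in> set_pmf \<mu> then visits n (t x) A else {})" for t
    by (auto simp: visits_def rcomp_Suc_stl streams_Stream simp del: rcomp.simps)
  have "emeasure paths (visits (Suc n) x A) =
      (\<integral>\<^sup>+ t. emeasure paths {\<omega> \<in> space paths. t ## \<omega> \<in> visits (Suc n) x A} \<partial>measure_pmf \<mu>)"
    by (rule prob_space.emeasure_stream_space[OF prob_space_measure_pmf sets_visits])
  also have "\<dots> = (\<integral>\<^sup>+ t. ennreal (trans_prob \<mu> n (t x) A) \<partial>measure_pmf \<mu>)"
    unfolding shift by (intro nn_integral_cong_AE) (auto simp: AE_measure_pmf_iff Suc.IH)
  also have "\<dots> = (\<Sum>t\<in>set_pmf \<mu>. ennreal (pmf \<mu> t * trans_prob \<mu> n (t x) A))"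
    using finite_support
    by (simp add: nn_integral_measure_pmf_finite ennreal_mult' trans_prob_nonneg mult.commute)
  also have "\<dots> = ennreal (trans_prob \<mu> (Suc n) x A)"
    unfolding trans_prob_Suc by (rule sum_ennreal) (simp add: trans_prob_nonneg)
  finally show ?case .
qed

lemma measure_visits: "measure paths (visits n x A) = trans_prob \<mu> n x A"
  by (simp add: measure_def emeasure_visits trans_prob_nonneg)

lemma recurrent_not_summable:
  assumes rec: "AE \<omega> in paths. \<exists>\<^sub>\<infinity>n. rcomp n \<omega> x \<in> J"
  shows "\<not> summable (\<lambda>n. trans_prob \<mu> n x J)"
proof
  assume "summable (\<lambda>n. trans_prob \<mu> n x J)"
  then have "AE \<omega> in paths. eventually (\<lambda>n. \<omega> \<in> space paths - visits n x J) sequentially"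
    by (intro borel_cantelli_AE1)
       (auto simp: sets_visits emeasure_visits measure_visits)
  then have "AE \<omega> in paths. False"
    using rec AE_in_streams_set_pmf
  proof eventually_elim
    case (elim \<omega>)
    then obtain N where "\<forall>n\<ge>N. \<omega> \<notin> visits n x J"
      by (auto simp: eventually_sequentially)
    moreover obtain n where "n \<ge> N" "rcomp n \<omega> x \<in> J"
      using elim by (auto simp: INFM_nat_le)
    ultimately show False
      using elim by (auto simp: visits_def)
  qed
  then show False
    by (simp add: prob_space.AE_False[OF prob_space.prob_space_stream_space[OF prob_space_measure_pmf]])
qed

lemma recurrent_reaches:
  assumes "AE \<omega> in paths. \<exists>\<^sub>\<infinity>n. rcomp n \<omega> x \<in> J"
  shows "\<exists>n. 0 < trans_prob \<mu> n x J"
proof (rule ccontr)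
  assume "\<nexists>n. 0 < trans_prob \<mu> n x J"
  then have "(\<lambda>n. trans_prob \<mu> n x J) = (\<lambda>n. 0)"
    using trans_prob_nonneg[of \<mu> _ x J] by (auto simp: order_less_le)
  then show False
    using recurrent_not_summable[OF assms] by simp
qed

lemma recurrent_occupation_at_top:
  assumes "AE \<omega> in paths. \<exists>\<^sub>\<infinity>n. rcomp n \<omega> x \<in> J"
  shows "filterlim (\<lambda>N. \<Sum>n<N. trans_prob \<mu> n x J) at_top sequentially"
  by (rule partial_sums_at_top_if_not_summable[OF trans_prob_nonneg recurrent_not_summable[OF assms]])

lemma trans_prob_le_future_visits:
  assumes reach: "\<forall>y\<in>K. \<exists>j\<le>m. \<delta> \<le> trans_prob \<mu> j y V"
  shows "\<delta> * trans_prob \<mu> n x K \<le> (\<Sum>j\<le>m. trans_prob \<mu> (n + j) x V)"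
proof -
  let ?W = "rcomp_pmf \<mu> n"
  have reach_sum: "\<delta> * indicator K y \<le> (\<Sum>j\<le>m. trans_prob \<mu> j y V)" for y
  proof (cases "y \<in> K")
    case True
    then obtain j where "j \<le> m" "\<delta> \<le> trans_prob \<mu> j y V"
      using reach by blast
    moreover have "trans_prob \<mu> j y V \<le> (\<Sum>j\<le>m. trans_prob \<mu> j y V)"
      using \<open>j \<le> m\<close> by (intro member_le_sum) (auto simp: trans_prob_nonneg)
    ultimately show ?thesis
      using True by simp
  qed (simp add: sum_nonneg trans_prob_nonneg)
  have "\<delta> * trans_prob \<mu> n x K = (\<Sum>h\<in>set_pmf ?W. pmf ?W h * (\<delta> * indicator K (h x)))"
    by (simp add: trans_prob_eq_sum sum_distrib_left algebra_simps)
  also have "\<dots> \<le> (\<Sum>h\<in>set_pmf ?W. pmf ?W h * (\<Sum>j\<le>m. trans_prob \<mu> j (h x) V))"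
    by (intro sum_mono mult_left_mono reach_sum) simp
  also have "\<dots> = (\<Sum>j\<le>m. trans_prob \<mu> (n + j) x V)"
    by (simp add: trans_prob_add sum_distrib_left sum.swap[of _ "set_pmf ?W"])
  finally show ?thesis .
qed

lemma occupation_le_future_occupation:
  assumes reach: "\<forall>y\<in>K. \<exists>j\<le>m. \<delta> \<le> trans_prob \<mu> j y V"
  shows "\<delta> * (\<Sum>n<N. trans_prob \<mu> n x K) \<le> real (Suc m) * ((\<Sum>n<N. trans_prob \<mu> n x V) + real m)"
proof -
  have shifted: "(\<Sum>n<N. trans_prob \<mu> (n + j) x V) \<le> (\<Sum>n<N. trans_prob \<mu> n x V) + real m"
    if "j \<le> m" for j
  proof -
    have "(\<Sum>n<N. trans_prob \<mu> (n + j) x V) = (\<Sum>n\<in>{j..<N + j}. trans_prob \<mu> n x V)"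
      using sum.shift_bounds_nat_ivl[of "\<lambda>n. trans_prob \<mu> n x V" 0 j N]
      by (simp add: lessThan_atLeast0)
    also have "\<dots> \<le> (\<Sum>n<N + m. trans_prob \<mu> n x V)"
      using that by (intro sum_mono2) (auto simp: trans_prob_nonneg)
    also have "\<dots> = (\<Sum>n<N. trans_prob \<mu> n x V) + (\<Sum>n\<in>{N..<N + m}. trans_prob \<mu> n x V)"
      by (metis le_add1 lessThan_atLeast0 sum.atLeastLessThan_concat zero_le)
    also have "(\<Sum>n\<in>{N..<N + m}. trans_prob \<mu> n x V) \<le> (\<Sum>n\<in>{N..<N + m}. 1)"
      by (intro sum_mono trans_prob_le_1)
    finally show ?thesis by simp
  qed
  have "\<delta> * (\<Sum>n<N. trans_prob \<mu> n x K) \<le> (\<Sum>n<N. \<Sum>j\<le>m. trans_prob \<mu> (n + j) x V)"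
    unfolding sum_distrib_left by (intro sum_mono trans_prob_le_future_visits[OF reach])
  also have "\<dots> = (\<Sum>j\<le>m. \<Sum>n<N. trans_prob \<mu> (n + j) x V)"
    by (rule sum.swap)
  also have "\<dots> \<le> (\<Sum>j\<le>m. (\<Sum>n<N. trans_prob \<mu> n x V) + real m)"
    by (intro sum_mono shifted) simp
  finally show ?thesis by simp
qed

end

locale homeo_rds = finite_rds +
  assumes homeo: "f \<in> set_pmf \<mu> \<Longrightarrow> homeo_plus f"
begin

text \<open>Each y reaches V through some continuous h of positive weight in some rcomp_pmf \<mu> n;
  the open sets h -` V cover K, and a finite subcover bounds n and the weight uniformly.\<close>

lemma uniform_reach:
  assumes "open V" and "compact K" and reach: "\<forall>y. \<exists>n. 0 < trans_prob \<mu> n y V"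
  shows "\<exists>m \<delta>. 0 < \<delta> \<and> (\<forall>y\<in>K. \<exists>j\<le>m. \<delta> \<le> trans_prob \<mu> j y V)"
proof -
  let ?C = "{(n, h). h \<in> set_pmf (rcomp_pmf \<mu> n)}"
  let ?V = "\<lambda>(n, h). (h :: real \<Rightarrow> real) -` V"
  have "open (?V c)" if "c \<in> ?C" for c
    using that continuous_on_rcomp_pmf[OF homeo_plus_continuous[OF homeo]] \<open>open V\<close>
    by (auto intro!: open_vimage)
  moreover have "K \<subseteq> \<Union> (?V ` ?C)"
    using reach by (fastforce simp: trans_prob_pos_iff)
  ultimately obtain C' where C': "C' \<subseteq> ?C" "finite C'" "K \<subseteq> \<Union> (?V ` C')"
    using compactE_image[OF \<open>compact K\<close>] by metis
  define m where "m = Max (fst ` C' \<union> {0})"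
  define \<delta> where "\<delta> = Min ((\<lambda>(n, h). pmf (rcomp_pmf \<mu> n) h) ` C' \<union> {1})"
  have "0 < \<delta>"
    unfolding \<delta>_def using C' by (subst Min_gr_iff) (auto simp: set_pmf_iff order_le_neq_trans)
  moreover have "\<exists>j\<le>m. \<delta> \<le> trans_prob \<mu> j y V" if "y \<in> K" for y
  proof -
    obtain n h where nh: "(n, h) \<in> C'" "h y \<in> V"
      using C' \<open>y \<in> K\<close> by blast
    have "n \<le> m"
      unfolding m_def using nh C' by (intro Max_ge) force+
    have "\<delta> \<le> pmf (rcomp_pmf \<mu> n) h"
      unfolding \<delta>_def using nh C' by (intro Min_le) force+
    also have "\<dots> \<le> trans_prob \<mu> n y V"
      unfolding trans_prob_def measure_pmf_single[symmetric]
      using nh by (intro measure_pmf.finite_measure_mono) auto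
    finally show ?thesis using \<open>n \<le> m\<close> by blast
  qed
  ultimately show ?thesis by blast
qed

lemma occupation_compact_le_open:
  assumes "open V" and "compact K" and reach: "\<forall>y. \<exists>n. 0 < trans_prob \<mu> n y V"
  shows "\<exists>C. \<forall>N. (\<Sum>n<N. trans_prob \<mu> n x K) \<le> C * ((\<Sum>n<N. trans_prob \<mu> n x V) + 1)"
proof -
  obtain m \<delta> where "0 < \<delta>" and reach_K: "\<forall>y\<in>K. \<exists>j\<le>m. \<delta> \<le> trans_prob \<mu> j y V"
    using uniform_reach[OF assms] by blast
  have "(\<Sum>n<N. trans_prob \<mu> n x K) \<le> real (Suc m) ^ 2 / \<delta> * ((\<Sum>n<N. trans_prob \<mu> n x V) + 1)" for N
  proof -
    let ?s = "\<Sum>n<N. trans_prob \<mu> n x V"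
    have "0 \<le> ?s"
      by (simp add: sum_nonneg trans_prob_nonneg)
    have "\<delta> * (\<Sum>n<N. trans_prob \<mu> n x K) \<le> real (Suc m) * (?s + real m)"
      by (rule occupation_le_future_occupation[OF reach_K])
    also have "\<dots> \<le> real (Suc m) * (real (Suc m) * (?s + 1))"
      using \<open>0 \<le> ?s\<close> by (intro mult_left_mono) (auto simp: algebra_simps)
    finally show ?thesis
      using \<open>0 < \<delta>\<close> by (simp add: field_simps power2_eq_square)
  qed
  then show ?thesis by blast
qed

end

section \<open>Occupation distribution functions\<close>

definition occupation_cdf :: "(real \<Rightarrow> real) pmf \<Rightarrow> nat \<Rightarrow> real \<Rightarrow> real" where
  "occupation_cdf \<mu> N y = (\<Sum>n<N. trans_prob \<mu> n 0 {..y})"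

lemma occupation_cdf_diff:
  assumes "u \<le> v"
  shows "occupation_cdf \<mu> N v - occupation_cdf \<mu> N u = (\<Sum>n<N. trans_prob \<mu> n 0 {u<..v})"
proof -
  have "{..v} = {..u} \<union> {u<..v}"
    using assms by auto
  then have "trans_prob \<mu> n 0 {..v} = trans_prob \<mu> n 0 {..u} + trans_prob \<mu> n 0 {u<..v}" for n
    by (simp add: trans_prob_Un disjoint_iff)
  then show ?thesis
    by (simp add: occupation_cdf_def sum_subtractf[symmetric])
qed

lemma mono_occupation_cdf: "mono (occupation_cdf \<mu> N)"
  by (rule monoI) (simp add: occupation_cdf_def sum_mono trans_prob_mono)

context homeo_rds
begin

lemma occupation_cdf_stationary_defect:
  "(\<Sum>f\<in>set_pmf \<mu>. pmf \<mu> f * occupation_cdf \<mu> N (inv f y)) =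
     occupation_cdf \<mu> N y + trans_prob \<mu> N 0 {..y} - trans_prob \<mu> 0 0 {..y}"
proof -
  have "(\<Sum>f\<in>set_pmf \<mu>. pmf \<mu> f * occupation_cdf \<mu> N (inv f y)) =
      (\<Sum>n<N. trans_prob \<mu> (Suc n) 0 {..y})"
    by (simp add: occupation_cdf_def trans_prob_Suc_last vimage_atMost_homeo_plus homeo
        sum_distrib_left sum.swap[of _ "set_pmf \<mu>"])
  also have "\<dots> = occupation_cdf \<mu> N y + trans_prob \<mu> N 0 {..y} - trans_prob \<mu> 0 0 {..y}"
    using sum.lessThan_Suc_shift[of "\<lambda>n. trans_prob \<mu> n 0 {..y}" N]
    by (simp add: occupation_cdf_def)
  finally show ?thesis .
qed

lemma occupation_cdf_defect_le_1:
  "\<bar>occupation_cdf \<mu> N y - (\<Sum>f\<in>set_pmf \<mu>. pmf \<mu> f * occupation_cdf \<mu> N (inv f y))\<bar> \<le> 1"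
  using trans_prob_nonneg[of \<mu> N 0 "{..y}"] trans_prob_le_1[of \<mu> N 0 "{..y}"]
    trans_prob_nonneg[of \<mu> 0 0 "{..y}"] trans_prob_le_1[of \<mu> 0 0 "{..y}"]
  by (simp add: occupation_cdf_stationary_defect abs_le_iff)

lemma occupation_cdf_increment_bound:
  assumes "open V" and reach: "\<forall>y. \<exists>n. 0 < trans_prob \<mu> n y V"
  shows "\<exists>C. \<forall>N. \<bar>occupation_cdf \<mu> N y - occupation_cdf \<mu> N 0\<bar> \<le>
                  C * ((\<Sum>n<N. trans_prob \<mu> n 0 V) + 1)"
proof -
  let ?K = "{min 0 y..max 0 y}"
  obtain C where C: "\<forall>N. (\<Sum>n<N. trans_prob \<mu> n 0 ?K) \<le> C * ((\<Sum>n<N. trans_prob \<mu> n 0 V) + 1)"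
    using occupation_compact_le_open[OF \<open>open V\<close> compact_Icc reach] by blast
  have "\<bar>occupation_cdf \<mu> N y - occupation_cdf \<mu> N 0\<bar> \<le> (\<Sum>n<N. trans_prob \<mu> n 0 ?K)" for N
  proof -
    have "\<bar>occupation_cdf \<mu> N y - occupation_cdf \<mu> N 0\<bar> =
        occupation_cdf \<mu> N (max 0 y) - occupation_cdf \<mu> N (min 0 y)"
      using mono_occupation_cdf[of \<mu> N] by (cases "0 \<le> y") (auto simp: monoD)
    also have "\<dots> \<le> (\<Sum>n<N. trans_prob \<mu> n 0 ?K)"
      by (auto simp: occupation_cdf_diff intro!: sum_mono trans_prob_mono)
    finally show ?thesis .
  qed
  then show ?thesis
    using C by (meson order_trans)
qed

end

section \<open>A Helly-type selection argument\<close>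

lemma countable_pointwise_convergent_subseq:
  fixes F :: "nat \<Rightarrow> 'a \<Rightarrow> real"
  assumes "countable D" and bdd: "\<And>x. x \<in> D \<Longrightarrow> bounded (range (\<lambda>k. F k x))"
  shows "\<exists>s. strict_mono s \<and> (\<forall>x\<in>D. convergent (\<lambda>k. F (s k) x))"
proof (cases "D = {}")
  case True
  then show ?thesis using strict_mono_id by blast
next
  case False
  define r where "r = from_nat_into D"
  have range_r: "range r = D"
    unfolding r_def using range_from_nat_into[OF False \<open>countable D\<close>] .
  let ?P = "\<lambda>n s. convergent (\<lambda>k. F (s k) (r n))"
  interpret diag: subseqs ?P
  proof (unfold subseqs_def, intro allI impI)
    fix n and s :: "nat \<Rightarrow> nat"
    have "bounded (range (\<lambda>k. F (s k) (r n)))"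
      by (rule bounded_subset[OF bdd[of "r n"]]) (auto simp: range_r[symmetric])
    then obtain l s' where "strict_mono s'" "((\<lambda>k. F (s k) (r n)) \<circ> s') \<longlonglongrightarrow> l"
      using bounded_imp_convergent_subsequence by blast
    then show "\<exists>s'. strict_mono s' \<and> convergent (\<lambda>k. F ((s \<circ> s') k) (r n))"
      by (auto simp: convergent_def comp_def)
  qed
  have "convergent (\<lambda>k. F (diag.diagseq k) (r n))" for n
  proof -
    have "(\<lambda>k. F ((diag.seqseq (Suc n) \<circ> (\<lambda>k. diag.fold_reduce (Suc n) k (Suc n + k))) k) (r n)) =
        (\<lambda>k. F (diag.seqseq (Suc n) k) (r n)) \<circ> (\<lambda>k. diag.fold_reduce (Suc n) k (Suc n + k))"
      by auto
    then have "convergent (\<lambda>k. F ((diag.diagseq \<circ> (+) (Suc n)) k) (r n))"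
      unfolding diag.diagseq_seqseq
      by (simp only:) (intro convergent_subseq_convergent diag.seqseq_holds diag.subseq_diagonal_rest)
    then obtain L where "(\<lambda>k. F (diag.diagseq (k + Suc n)) (r n)) \<longlonglongrightarrow> L"
      by (auto simp: add.commute dest: convergentD)
    then have "(\<lambda>k. F (diag.diagseq k) (r n)) \<longlonglongrightarrow> L"
      by (rule LIMSEQ_offset)
    then show ?thesis
      by (auto simp: convergent_def)
  qed
  then show ?thesis
    using diag.subseq_diagseq range_r by blast
qed

definition rat_orbit :: "(real \<Rightarrow> real) set \<Rightarrow> real set" where
  "rat_orbit S = (\<Union>ws\<in>lists S. foldr (\<circ>) ws id ` \<rat>)"

lemma countable_rat_orbit: "finite S \<Longrightarrow> countable (rat_orbit S)"
  unfolding rat_orbit_def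
  by (intro countable_UN countable_lists countable_finite countable_image countable_rat) auto

lemma Rats_subset_rat_orbit: "\<rat> \<subseteq> rat_orbit S"
proof -
  have "foldr (\<circ>) [] id ` \<rat> \<subseteq> rat_orbit S"
    unfolding rat_orbit_def by blast
  then show ?thesis by simp
qed

lemma rat_orbit_closed:
  assumes "f \<in> S" and "d \<in> rat_orbit S"
  shows "f d \<in> rat_orbit S"
proof -
  obtain ws q where "ws \<in> lists S" "q \<in> \<rat>" "d = foldr (\<circ>) ws id q"
    using assms(2) by (auto simp: rat_orbit_def)
  then have "f # ws \<in> lists S" "f d = foldr (\<circ>) (f # ws) id q"
    using assms(1) by auto
  then show ?thesis
    using \<open>q \<in> \<rat>\<close> unfolding rat_orbit_def by blast
qed

locale right_regularization =
  fixes D :: "real set" and \<Phi> :: "real \<Rightarrow> real"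
  assumes Rats_subset: "\<rat> \<subseteq> D"
    and mono_on_D: "mono_on D \<Phi>"
begin

definition right_reg :: "real \<Rightarrow> real" where
  "right_reg y = Inf (\<Phi> ` (D \<inter> {y<..}))"

lemma D_above_nonempty: "D \<inter> {y<..} \<noteq> {}"
  using Rats_subset Rats_no_top_le[of "y + 1"] by force

lemma bdd_below_above: "bdd_below (\<Phi> ` (D \<inter> {y<..}))"
proof -
  obtain q where "q \<in> \<rat>" "q < y"
    using Rats_no_bot_less by blast
  then show ?thesis
    using Rats_subset by (intro bdd_belowI[of _ "\<Phi> q"]) (auto intro!: mono_onD[OF mono_on_D])
qed

lemma right_reg_le: "d \<in> D \<Longrightarrow> y < d \<Longrightarrow> right_reg y \<le> \<Phi> d"
  unfolding right_reg_def using bdd_below_above by (intro cInf_lower) auto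

lemma le_right_reg: "d \<in> D \<Longrightarrow> d \<le> y \<Longrightarrow> \<Phi> d \<le> right_reg y"
  unfolding right_reg_def using D_above_nonempty
  by (intro cInf_greatest) (auto intro!: mono_onD[OF mono_on_D])

lemma right_reg_approx:
  assumes "0 < e"
  shows "\<exists>d\<in>D. y < d \<and> \<Phi> d < right_reg y + e"
proof -
  have "Inf (\<Phi> ` (D \<inter> {y<..})) < right_reg y + e"
    using assms by (simp add: right_reg_def)
  then have "\<exists>t\<in>\<Phi> ` (D \<inter> {y<..}). t < right_reg y + e"
    by (subst (asm) cInf_less_iff) (auto simp: D_above_nonempty bdd_below_above)
  then show ?thesis
    by auto
qed

lemma mono_right_reg: "mono right_reg"
  unfolding right_reg_def[abs_def] mono_def using D_above_nonempty
  by (auto intro!: cInf_greatest right_reg_le[unfolded right_reg_def])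

lemma continuous_at_right_reg: "continuous (at_right a) right_reg"
proof (subst continuous_at_right_real_increasing)
  show "\<And>x y. x \<le> y \<Longrightarrow> right_reg x \<le> right_reg y"
    by (rule monoD[OF mono_right_reg])
next
  show "\<forall>e>0. \<exists>\<delta>>0. right_reg (a + \<delta>) - right_reg a < e"
  proof (intro allI impI)
    fix e :: real assume "0 < e"
    then obtain d where d: "d \<in> D" "a < d" "\<Phi> d < right_reg a + e"
      using right_reg_approx by blast
    have "right_reg (a + (d - a) / 2) \<le> \<Phi> d"
      using d by (intro right_reg_le) (auto simp: field_simps)
    then show "\<exists>\<delta>>0. right_reg (a + \<delta>) - right_reg a < e"
      using d by (intro exI[of _ "(d - a) / 2"]) auto
  qed
qed

lemma tendsto_right_reg:
  assumes e: "\<And>k. e k \<in> D" "\<And>k. z < e k" and lim: "e \<longlonglongrightarrow> z"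
  shows "(\<lambda>k. \<Phi> (e k)) \<longlonglongrightarrow> right_reg z"
proof (rule LIMSEQ_I)
  fix r :: real assume "0 < r"
  then obtain d where d: "d \<in> D" "z < d" "\<Phi> d < right_reg z + r"
    using right_reg_approx by blast
  obtain K where "\<And>k. K \<le> k \<Longrightarrow> e k < d"
    using order_tendstoD(2)[OF lim \<open>z < d\<close>] by (auto simp: eventually_sequentially)
  then have "right_reg z \<le> \<Phi> (e k) \<and> \<Phi> (e k) \<le> \<Phi> d" if "K \<le> k" for k
    using that e d by (auto intro: right_reg_le mono_onD[OF mono_on_D] less_imp_le)
  then show "\<exists>K. \<forall>k\<ge>K. norm (\<Phi> (e k) - right_reg z) < r"
    using d by (metis abs_of_nonneg diff_ge_0_iff_ge diff_less_eq add.commute real_norm_def order_le_less_trans)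
qed

text \<open>Stationarity on D passes to the regularisation because each inv f is continuous and
  increasing, hence maps a sequence in D decreasing to z to one decreasing to inv f z.\<close>

lemma right_reg_stationary:
  fixes S :: "(real \<Rightarrow> real) set" and p :: "(real \<Rightarrow> real) \<Rightarrow> real"
  assumes homeo: "\<And>f. f \<in> S \<Longrightarrow> homeo_plus f"
    and closed: "\<And>f d. f \<in> S \<Longrightarrow> d \<in> D \<Longrightarrow> inv f d \<in> D"
    and stat: "\<And>d. d \<in> D \<Longrightarrow> \<Phi> d = (\<Sum>f\<in>S. p f * \<Phi> (inv f d))"
  shows "right_reg z = (\<Sum>f\<in>S. p f * right_reg (inv f z))"
proof -
  have "\<forall>k. \<exists>q\<in>\<rat>. z < q \<and> q < z + 1 / Suc k"
    by (auto intro!: Rats_dense_in_real)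
  then obtain e where e: "\<And>k. e k \<in> \<rat>" "\<And>k. z < e k" "\<And>k. e k < z + 1 / Suc k"
    by metis
  have eD: "e k \<in> D" for k
    using e Rats_subset by auto
  have lim: "e \<longlonglongrightarrow> z"
  proof (rule tendsto_sandwich[of "\<lambda>_. z" _ _ "\<lambda>k. z + 1 / Suc k"])
    show "(\<lambda>k. z + 1 / real (Suc k)) \<longlonglongrightarrow> z"
      using tendsto_add[OF tendsto_const LIMSEQ_inverse_real_of_nat, of z] by (simp add: inverse_eq_divide)
    show "\<forall>\<^sub>F k in sequentially. z \<le> e k" "\<forall>\<^sub>F k in sequentially. e k \<le> z + 1 / Suc k"
      using e by (intro always_eventually allI less_imp_le; simp)+
  qed simp
  have "(\<lambda>k. \<Phi> (inv f (e k))) \<longlonglongrightarrow> right_reg (inv f z)" if "f \<in> S" for f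
  proof (rule tendsto_right_reg)
    have "homeo_plus (inv f)"
      using homeo_plus_inv homeo that by blast
    then show "inv f z < inv f (e k)" "(\<lambda>k. inv f (e k)) \<longlonglongrightarrow> inv f z" for k
      using e(2) lim by (auto simp: strict_mono_less homeo_plus_strict_mono continuous_on_eq_continuous_at
          intro: isCont_tendsto_compose dest!: homeo_plus_continuous)
  qed (use closed eD that in auto)
  then have "(\<lambda>k. \<Sum>f\<in>S. p f * \<Phi> (inv f (e k))) \<longlonglongrightarrow> (\<Sum>f\<in>S. p f * right_reg (inv f z))"
    by (intro tendsto_intros) auto
  moreover have "(\<lambda>k. \<Sum>f\<in>S. p f * \<Phi> (inv f (e k))) = (\<lambda>k. \<Phi> (e k))"
    using stat eD by auto
  ultimately show ?thesis
    using tendsto_right_reg[OF eD e(2) lim] LIMSEQ_unique by metis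
qed

end

lemma stationary_limit_cdf:
  fixes F :: "nat \<Rightarrow> real \<Rightarrow> real" and p :: "(real \<Rightarrow> real) \<Rightarrow> real"
  assumes "finite S" and homeo: "\<And>f. f \<in> S \<Longrightarrow> homeo_plus f"
    and mono: "\<And>k. mono (F k)"
    and bdd: "\<And>y. bounded (range (\<lambda>k. F k y))"
    and defect: "\<And>y. (\<lambda>k. F k y - (\<Sum>f\<in>S. p f * F k (inv f y))) \<longlonglongrightarrow> 0"
    and "q1 \<in> \<rat>" "q2 \<in> \<rat>" and unit: "\<And>k. F k q2 - F k q1 = 1"
  shows "\<exists>G. mono G \<and> (\<forall>x. continuous (at_right x) G)
           \<and> (\<forall>z. G z = (\<Sum>f\<in>S. p f * G (inv f z))) \<and> G (q1 - 1) < G q2"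
proof -
  define D where "D = rat_orbit (inv ` S)"
  have closed: "inv f d \<in> D" if "f \<in> S" "d \<in> D" for f d
    using rat_orbit_closed[of "inv f" "inv ` S" d] that unfolding D_def by blast
  have QD: "\<rat> \<subseteq> D"
    by (simp add: D_def Rats_subset_rat_orbit)
  have "countable D"
    using \<open>finite S\<close> by (simp add: D_def countable_rat_orbit)
  then obtain s where "strict_mono s" and conv: "\<forall>d\<in>D. convergent (\<lambda>k. F (s k) d)"
    using countable_pointwise_convergent_subseq[of D F] bdd by blast
  define \<Phi> where "\<Phi> d = lim (\<lambda>k. F (s k) d)" for d
  have lim: "(\<lambda>k. F (s k) d) \<longlonglongrightarrow> \<Phi> d" if "d \<in> D" for d
    using conv that unfolding \<Phi>_def by (simp add: convergent_LIMSEQ_iff)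
  have "mono_on D \<Phi>"
  proof (rule mono_onI)
    fix d d' assume "d \<in> D" "d' \<in> D" "d \<le> d'"
    then show "\<Phi> d \<le> \<Phi> d'"
      using LIMSEQ_le[OF lim[OF \<open>d \<in> D\<close>] lim[OF \<open>d' \<in> D\<close>]] monoD[OF mono \<open>d \<le> d'\<close>]
      by blast
  qed
  then interpret right_regularization D \<Phi>
    using QD by unfold_locales
  have "\<Phi> d = (\<Sum>f\<in>S. p f * \<Phi> (inv f d))" if "d \<in> D" for d
  proof -
    have "(\<lambda>k. F (s k) d - (\<Sum>f\<in>S. p f * F (s k) (inv f d))) \<longlonglongrightarrow> 0"
      using LIMSEQ_subseq_LIMSEQ[OF defect \<open>strict_mono s\<close>] by (simp add: comp_def)
    moreover have "(\<lambda>k. F (s k) d - (\<Sum>f\<in>S. p f * F (s k) (inv f d))) \<longlonglongrightarrow>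
        \<Phi> d - (\<Sum>f\<in>S. p f * \<Phi> (inv f d))"
      using that closed by (intro tendsto_intros lim) auto
    ultimately show ?thesis
      using LIMSEQ_unique by fastforce
  qed
  then have stat: "\<forall>z. right_reg z = (\<Sum>f\<in>S. p f * right_reg (inv f z))"
    using right_reg_stationary[OF homeo closed] by blast
  have "(\<lambda>k. F (s k) q2 - F (s k) q1) \<longlonglongrightarrow> \<Phi> q2 - \<Phi> q1"
    using QD \<open>q1 \<in> \<rat>\<close> \<open>q2 \<in> \<rat>\<close> by (intro tendsto_diff lim) auto
  then have "\<Phi> q2 - \<Phi> q1 = 1"
    by (simp add: unit LIMSEQ_const_iff)
  moreover have "right_reg (q1 - 1) \<le> \<Phi> q1" "\<Phi> q2 \<le> right_reg q2"
    using QD \<open>q1 \<in> \<rat>\<close> \<open>q2 \<in> \<rat>\<close> by (auto intro: right_reg_le le_right_reg)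
  ultimately have "right_reg (q1 - 1) < right_reg q2"
    by linarith
  then show ?thesis
    using mono_right_reg continuous_at_right_reg stat by blast
qed

section \<open>Stationary Stieltjes measures\<close>

lemma measure_eqI_Ioc:
  fixes M N :: "real measure"
  assumes sets: "sets M = sets borel" "sets N = sets borel"
    and fin: "\<And>a b. a \<le> b \<Longrightarrow> emeasure M {a<..b} < \<infinity>"
    and eq: "\<And>a b. a \<le> b \<Longrightarrow> emeasure M {a<..b} = emeasure N {a<..b}"
  shows "M = N"
proof (rule measure_eqI_generator_eq[where E="range (\<lambda>(a, b). {a<..b})" and \<Omega>=UNIV
      and A="\<lambda>i. {-real i<..real i}"])
  show "Int_stable (range (\<lambda>(a, b). {a<..b :: real}))"
  proof (rule Int_stableI)
    fix X Y assume "X \<in> range (\<lambda>(a, b). {a<..b :: real})" "Y \<in> range (\<lambda>(a, b). {a<..b :: real})"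
    then obtain a b c d where "X = {a<..b}" "Y = {c<..d}"
      by auto
    then have "X \<inter> Y = (\<lambda>(a, b). {a<..b}) (max a c, min b d)"
      by auto
    then show "X \<inter> Y \<in> range (\<lambda>(a, b). {a<..b :: real})"
      by (metis rangeI)
  qed
  show "sets M = sigma_sets UNIV (range (\<lambda>(a, b). {a<..b}))"
    "sets N = sigma_sets UNIV (range (\<lambda>(a, b). {a<..b}))"
    using sets by (simp_all add: borel_sigma_sets_Ioc)
  have "x \<in> (\<Union>i. {- real i<..real i})" for x :: real
  proof -
    obtain i :: nat where "\<bar>x\<bar> < real i"
      using reals_Archimedean2 by blast
    then have "x \<in> {- real i<..real i}"
      by (simp add: abs_less_iff)
    then show ?thesis
      by blast
  qed
  then show "(\<Union>i. {- real i<..real i}) = UNIV"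
    by blast
  show "emeasure M X = emeasure N X" if "X \<in> range (\<lambda>(a, b). {a<..b})" for X
    using that eq by (cases "X = {}") auto
qed (use fin in \<open>auto simp: less_top\<close>)

lemma emeasure_measure_of_sum:
  assumes "finite I" and sets: "\<And>i. i \<in> I \<Longrightarrow> sets (M i) = sets N" and "A \<in> sets N"
  shows "emeasure (measure_of (space N) (sets N) (\<lambda>A. \<Sum>i\<in>I. emeasure (M i) A)) A =
           (\<Sum>i\<in>I. emeasure (M i) A)"
proof (rule emeasure_measure_of_sigma[OF sets.sigma_algebra_axioms _ _ \<open>A \<in> sets N\<close>])
  show "positive (sets N) (\<lambda>A. \<Sum>i\<in>I. emeasure (M i) A)"
    by (simp add: positive_def)
  show "countably_additive (sets N) (\<lambda>A. \<Sum>i\<in>I. emeasure (M i) A)"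
  proof (rule countably_additiveI)
    fix A :: "nat \<Rightarrow> _" assume "range A \<subseteq> sets N" "disjoint_family A"
    then have "(\<Sum>j. emeasure (M i) (A j)) = emeasure (M i) (\<Union>j. A j)" if "i \<in> I" for i
      using sets[OF that] by (intro suminf_emeasure) auto
    then show "(\<Sum>j. \<Sum>i\<in>I. emeasure (M i) (A j)) = (\<Sum>i\<in>I. emeasure (M i) (\<Union>j. A j))"
      by (simp add: suminf_sum)
  qed
qed

lemma emeasure_interval_measure_compact:
  assumes "mono G" and "\<And>x. continuous (at_right x) G" and "compact K"
  shows "emeasure (interval_measure G) K < \<infinity>"
proof -
  obtain B where B: "\<forall>x\<in>K. \<bar>x\<bar> \<le> B"
    using compact_imp_bounded[OF \<open>compact K\<close>] by (auto simp: bounded_real)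
  then have "K \<subseteq> {-\<bar>B\<bar>-1<..\<bar>B\<bar>}"
    by force
  then have "emeasure (interval_measure G) K \<le> emeasure (interval_measure G) {-\<bar>B\<bar>-1<..\<bar>B\<bar>}"
    by (intro emeasure_mono) auto
  also have "\<dots> = ennreal (G \<bar>B\<bar> - G (-\<bar>B\<bar>-1))"
    using assms by (intro emeasure_interval_measure_Ioc) (auto simp: monoD)
  finally show ?thesis
    by (simp add: le_less_trans)
qed

text \<open>Both sides are measures on the Borel sets; they agree on half-open intervals because
  each f -` {a<..b} is again such an interval and G is stationary.\<close>

lemma stationary_interval_measure:
  fixes G :: "real \<Rightarrow> real" and p :: "(real \<Rightarrow> real) \<Rightarrow> real"
  assumes "finite S" and homeo: "\<And>f. f \<in> S \<Longrightarrow> homeo_plus f"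
    and p_nonneg: "\<And>f. f \<in> S \<Longrightarrow> 0 \<le> p f"
    and "mono G" and rc: "\<And>x. continuous (at_right x) G"
    and stat: "\<And>z. G z = (\<Sum>f\<in>S. p f * G (inv f z))"
    and "A \<in> sets borel"
  shows "emeasure (interval_measure G) A =
           (\<Sum>f\<in>S. ennreal (p f) * emeasure (interval_measure G) (f -` A))"
proof -
  define \<nu> where "\<nu> = interval_measure G"
  define \<nu>' where "\<nu>' = measure_of (space borel) (sets borel)
      (\<lambda>A. \<Sum>f\<in>S. emeasure (scale_measure (p f) (distr \<nu> borel f)) A)"
  have meas: "f \<in> measurable \<nu> borel" if "f \<in> S" for f
    using borel_measurable_homeo_plus[OF homeo[OF that]] by (simp add: \<nu>_def measurable_def)
  have \<nu>': "emeasure \<nu>' A = (\<Sum>f\<in>S. ennreal (p f) * emeasure \<nu> (f -` A))" if "A \<in> sets borel" for A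
  proof -
    have "emeasure (scale_measure (p f) (distr \<nu> borel f)) A = ennreal (p f) * emeasure \<nu> (f -` A)"
      if "f \<in> S" for f
      using emeasure_distr[OF meas[OF that] \<open>A \<in> sets borel\<close>] by (simp add: \<nu>_def)
    then show ?thesis
      unfolding \<nu>'_def using \<open>finite S\<close> \<open>A \<in> sets borel\<close>
      by (subst emeasure_measure_of_sum) simp_all
  qed
  have Ioc: "emeasure \<nu> {a<..b} = ennreal (G b - G a)" if "a \<le> b" for a b
    unfolding \<nu>_def using \<open>mono G\<close> rc that by (intro emeasure_interval_measure_Ioc) (auto simp: monoD)
  have "\<nu> = \<nu>'"
  proof (rule measure_eqI_Ioc)
    show "sets \<nu>' = sets borel"
      unfolding \<nu>'_def by (rule sigma_algebra.sets_measure_of_eq[OF sets.sigma_algebra_axioms])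
    fix a b :: real assume "a \<le> b"
    then show "emeasure \<nu> {a<..b} < \<infinity>"
      by (simp add: Ioc)
    have inv_le: "inv f a \<le> inv f b" if "f \<in> S" for f
      using homeo_plus_inv[OF homeo[OF that]] \<open>a \<le> b\<close> by (simp add: homeo_plus_strict_mono strict_mono_less_eq)
    have "emeasure \<nu>' {a<..b} = (\<Sum>f\<in>S. ennreal (p f * (G (inv f b) - G (inv f a))))"
      using inv_le p_nonneg by (simp add: \<nu>' vimage_Ioc_homeo_plus homeo Ioc ennreal_mult')
    also have "\<dots> = ennreal (\<Sum>f\<in>S. p f * (G (inv f b) - G (inv f a)))"
      using inv_le p_nonneg \<open>mono G\<close> by (intro sum_ennreal) (simp add: monoD)
    also have "(\<Sum>f\<in>S. p f * (G (inv f b) - G (inv f a))) = G b - G a"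
      by (simp add: right_diff_distrib sum_subtractf stat[symmetric])
    finally show "emeasure \<nu> {a<..b} = emeasure \<nu>' {a<..b}"
      using Ioc[OF \<open>a \<le> b\<close>] by simp
  qed (simp add: \<nu>_def)
  then show ?thesis
    using \<nu>'[OF \<open>A \<in> sets borel\<close>] by (simp add: \<nu>_def)
qed

context homeo_rds
begin

lemma normalized_occupation_bounded:
  assumes "open V" and reach: "\<forall>y. \<exists>n. 0 < trans_prob \<mu> n y V"
    and Z_ge: "\<And>k. 1 \<le> Z k" "\<And>k. (\<Sum>n<N k. trans_prob \<mu> n 0 V) \<le> Z k"
  shows "bounded (range (\<lambda>k. (occupation_cdf \<mu> (N k) y - occupation_cdf \<mu> (N k) 0) / Z k))"
proof -
  obtain C where C: "\<And>N. \<bar>occupation_cdf \<mu> N y - occupation_cdf \<mu> N 0\<bar> \<le>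
      C * ((\<Sum>n<N. trans_prob \<mu> n 0 V) + 1)"
    using occupation_cdf_increment_bound[OF assms(1,2)] by blast
  have "0 \<le> C"
    using C[of 0] by simp
  have "\<bar>occupation_cdf \<mu> (N k) y - occupation_cdf \<mu> (N k) 0\<bar> / Z k \<le> 2 * C" for k
  proof -
    have "\<bar>occupation_cdf \<mu> (N k) y - occupation_cdf \<mu> (N k) 0\<bar> \<le> C * (Z k + 1)"
      using C[of "N k"] Z_ge(2)[of k] \<open>0 \<le> C\<close> by (meson add_right_mono mult_left_mono order_trans)
    also have "\<dots> \<le> 2 * C * Z k"
      using mult_left_mono[OF Z_ge(1)[of k] \<open>0 \<le> C\<close>] by (simp add: algebra_simps)
    finally show ?thesis
      using Z_ge(1)[of k] by (simp add: divide_le_eq)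
  qed
  moreover have "\<bar>Z k\<bar> = Z k" for k
    using Z_ge(1)[of k] by simp
  ultimately show ?thesis
    by (intro boundedI[of _ "2 * C"]) (auto simp: abs_divide)
qed

lemma normalized_occupation_defect:
  assumes "filterlim Z at_top sequentially"
  shows "(\<lambda>k. (occupation_cdf \<mu> (N k) y - occupation_cdf \<mu> (N k) 0) / Z k -
      (\<Sum>f\<in>set_pmf \<mu>. pmf \<mu> f * ((occupation_cdf \<mu> (N k) (inv f y) - occupation_cdf \<mu> (N k) 0) / Z k)))
      \<longlonglongrightarrow> 0"
proof (rule Lim_null_comparison)
  have "(\<Sum>f\<in>set_pmf \<mu>. pmf \<mu> f) = 1"
    using sum_pmf_eq_1[OF finite_support] by simp
  then have "(occupation_cdf \<mu> (N k) y - occupation_cdf \<mu> (N k) 0) / Z k -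
      (\<Sum>f\<in>set_pmf \<mu>. pmf \<mu> f * ((occupation_cdf \<mu> (N k) (inv f y) - occupation_cdf \<mu> (N k) 0) / Z k)) =
    (occupation_cdf \<mu> (N k) y - (\<Sum>f\<in>set_pmf \<mu>. pmf \<mu> f * occupation_cdf \<mu> (N k) (inv f y))) / Z k" for k
    by (simp add: diff_divide_distrib sum_divide_distrib[symmetric] right_diff_distrib sum_subtractf
        sum_distrib_right[symmetric])
  then show "\<forall>\<^sub>F k in sequentially. norm ((occupation_cdf \<mu> (N k) y - occupation_cdf \<mu> (N k) 0) / Z k -
      (\<Sum>f\<in>set_pmf \<mu>. pmf \<mu> f * ((occupation_cdf \<mu> (N k) (inv f y) - occupation_cdf \<mu> (N k) 0) / Z k)))
      \<le> 1 / \<bar>Z k\<bar>"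
    using occupation_cdf_defect_le_1 by (auto intro!: always_eventually divide_right_mono simp: abs_divide)
  show "(\<lambda>k. 1 / \<bar>Z k\<bar>) \<longlonglongrightarrow> 0"
    using tendsto_inverse_0_at_top[OF filterlim_compose[OF filterlim_abs_real assms]]
    by (simp add: inverse_eq_divide)
qed

lemma exists_stationary_cdf:
  assumes rec: "\<And>x. AE \<omega> in paths. \<exists>\<^sub>\<infinity>n. rcomp n \<omega> x \<in> {a..b}"
  shows "\<exists>G. mono G \<and> (\<forall>x. continuous (at_right x) G)
           \<and> (\<forall>z. G z = (\<Sum>f\<in>set_pmf \<mu>. pmf \<mu> f * G (inv f z))) \<and> (\<exists>u v. G u < G v)"
proof -
  obtain q1 where q1: "q1 \<in> \<rat>" "q1 < a"
    using Rats_no_bot_less by blast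
  obtain q2 where q2: "q2 \<in> \<rat>" "max (b + 1) q1 \<le> q2"
    using Rats_no_top_le by blast
  define V where "V = {q1<..<q2}"
  have "{a..b} \<subseteq> V" "V \<subseteq> {q1<..q2}"
    using q1 q2 by (auto simp: V_def)
  have reach: "\<forall>y. \<exists>n. 0 < trans_prob \<mu> n y V"
    using recurrent_reaches[OF rec] trans_prob_mono[OF \<open>{a..b} \<subseteq> V\<close>] by (meson less_le_trans)
  define Z where "Z N = occupation_cdf \<mu> N q2 - occupation_cdf \<mu> N q1" for N
  have visits_V_le: "(\<Sum>n<N. trans_prob \<mu> n 0 V) \<le> Z N" for N
    using q2 \<open>V \<subseteq> {q1<..q2}\<close>
    by (auto simp: Z_def occupation_cdf_diff intro!: sum_mono trans_prob_mono)
  have "(\<Sum>n<N. trans_prob \<mu> n 0 {a..b}) \<le> Z N" for N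
    using visits_V_le[of N] \<open>{a..b} \<subseteq> V\<close> by (meson order_trans sum_mono trans_prob_mono)
  then have Z_at_top: "filterlim Z at_top sequentially"
    by (intro filterlim_at_top_mono[OF recurrent_occupation_at_top[OF rec, of 0]] always_eventually) simp
  then obtain N0 where N0: "\<And>N. N0 \<le> N \<Longrightarrow> 1 \<le> Z N"
    by (auto simp: filterlim_at_top eventually_sequentially)
  define F where "F k y = (occupation_cdf \<mu> (k + N0) y - occupation_cdf \<mu> (k + N0) 0) / Z (k + N0)" for k y
  have "\<exists>G. mono G \<and> (\<forall>x. continuous (at_right x) G)
      \<and> (\<forall>z. G z = (\<Sum>f\<in>set_pmf \<mu>. pmf \<mu> f * G (inv f z))) \<and> G (q1 - 1) < G q2"
  proof (rule stationary_limit_cdf[OF finite_support homeo _ _ _ q1(1) q2(1)])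
    show "mono (F k)" for k
      using N0[of "k + N0"] mono_occupation_cdf
      by (auto simp: F_def mono_def monoD intro: divide_right_mono)
    show "bounded (range (\<lambda>k. F k y))" for y
      unfolding F_def using N0 visits_V_le
      by (intro normalized_occupation_bounded[OF _ reach]) (auto simp: V_def)
    show "(\<lambda>k. F k y - (\<Sum>f\<in>set_pmf \<mu>. pmf \<mu> f * F k (inv f y))) \<longlonglongrightarrow> 0" for y
      unfolding F_def using filterlim_compose[OF Z_at_top filterlim_add_const_nat_at_top]
      by (intro normalized_occupation_defect) (simp add: comp_def)
    show "F k q2 - F k q1 = 1" for k
      using N0[of "k + N0"] by (simp add: F_def Z_def diff_divide_distrib[symmetric])
  qed
  then show ?thesis by blast
qed

end

theorem mainTheorem15:
  fixes \<mu> :: "(real \<Rightarrow> real) pmf"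
  assumes "finite (set_pmf \<mu>)"
    and "\<forall>f \<in> set_pmf \<mu>. homeo_plus f"
    and "recurrent \<mu>"
  shows "\<exists>\<nu> :: real measure. sets \<nu> = sets borel
           \<and> (\<forall>K. compact K \<longrightarrow> emeasure \<nu> K < \<infinity>)
           \<and> emeasure \<nu> UNIV \<noteq> 0
           \<and> stationary \<mu> \<nu>"
proof -
  interpret homeo_rds \<mu>
    using assms(1,2) by unfold_locales auto
  obtain a b where "\<And>x. AE \<omega> in paths. \<exists>\<^sub>\<infinity>n. rcomp n \<omega> x \<in> {a..b}"
    using \<open>recurrent \<mu>\<close> by (auto simp: recurrent_def)
  then obtain G u v where G: "mono G" "\<And>x. continuous (at_right x) G"
    "\<And>z. G z = (\<Sum>f\<in>set_pmf \<mu>. pmf \<mu> f * G (inv f z))" and "G u < G v"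
    using exists_stationary_cdf by blast
  then have "u < v"
    by (metis monoD not_le order_less_irrefl)
  then have "emeasure (interval_measure G) {u<..v} \<noteq> 0"
    using G(1,2) \<open>G u < G v\<close> by (simp add: emeasure_interval_measure_Ioc monoD)
  then have "emeasure (interval_measure G) UNIV \<noteq> 0"
    by (metis emeasure_mono le_zero_eq sets.top sets_interval_measure space_interval_measure subset_UNIV)
  moreover have "stationary \<mu> (interval_measure G)"
    unfolding stationary_def using stationary_interval_measure[OF finite_support homeo _ G] by simp
  ultimately show ?thesis
    using emeasure_interval_measure_compact[OF G(1,2)] by (intro exI[of _ "interval_measure G"]) simp
qed

end
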